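(* In the hyperbolic plane let $l=(MN)$ be a line (the axis) with terminals $M,N$ at infinity. Let $(AB)$ and $(CD)$ be two lines lying in different half-planes bounded by $l$, with terminals $A,B,C,D$ at infinity, such that $M,N,A,B$ are four consecutive points on the circle at infinity and $M,N,D,C$ are four consecutive points on it. Put $\theta_1=\theta(A,B)$, $\theta_2=\theta(D,C)$, $\theta_{12}=\theta(B,C)$. Let $\delta_1,\delta_2$ be vectors with $\delta_1^2=\delta_2^2=-2$ orthogonal to $(AB)$ and $(CD)$ respectively such that $l$ is contained in both $\mathcal H^+_{\delta_1}$ and $\mathcal H^+_{\delta_2}$. Then $$(\delta_1,\delta_2)=2\,\mathrm{ch}\,\rho=4\frac{\mathrm{ch}\frac{\theta_1+\theta_{12}}{2}\,\mathrm{ch}\frac{\theta_2-\theta_{12}}{2}}{\mathrm{sh}\frac{\theta_1}{2}\,\mathrm{sh}\frac{\theta_2}{2}}-2,$$ where $\rho$ is the distance between the lines $(AB)$ and $(CD)$.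
   Context: Let $V$ be a $3$-dimensional real vector space with a symmetric bilinear form of signature $(1,2)$; the hyperbolic plane is $\mathcal L=V^+/\mathbb R_{>0}$ ($V^+$ a component of $\{x^2>0\}$), curvature $-1$. Points at infinity are isotropic rays in the closure of $V^+$; they form a circle identified with the real projective line, with cross-ratio $[P,Q,R,S]=\frac{(t_R-t_P)(t_S-t_Q)}{(t_R-t_Q)(t_S-t_P)}$ in a projective coordinate $t$. For $\delta$ with $\delta^2<0$, $\mathcal H^+_\delta=\{\mathbb R_{>0}x:(x,\delta)\ge0\}$. For points $A,B$ at infinity in the same half-plane bounded by the axis $l=(MN)$, $\theta(A,B)=\ln[M,N,A,B]$. For a point $X$ at infinity not on $l$ let $X'$ be the other terminal of the line through $X$ orthogonal to $l$; for $A,B$ in different half-planes bounded by $l$, $\theta(A,B)=\theta(A,B')$. *)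

theory Defs
  imports "HOL-Analysis.Analysis"
begin

text \<open>Model: V = R^3 with the symmetric bilinear form of signature (1,2)
  (x,y) = x1 y1 - x2 y2 - x3 y3.  V+ is the component of {x^2 > 0} with x1 > 0.\<close>

definition mink :: "real^3 \<Rightarrow> real^3 \<Rightarrow> real" where
  "mink x y = x$1 * y$1 - x$2 * y$2 - x$3 * y$3"

definition Vplus :: "(real^3) set" where
  "Vplus = {x. mink x x > 0 \<and> x$1 > 0}"

text \<open>A point at infinity is an isotropic ray in the closure of V+; it is
  represented by any nonzero vector on it.\<close>
definition at_inf :: "real^3 \<Rightarrow> bool" where
  "at_inf v \<longleftrightarrow> mink v v = 0 \<and> v$1 > 0"

text \<open>The (cone over the) line with terminals P, Q at infinity:
  the points of L on the geodesic (PQ) are the rays of s P + u Q, s,u > 0.\<close>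
definition line_pts :: "real^3 \<Rightarrow> real^3 \<Rightarrow> (real^3) set" where
  "line_pts P Q = {s *\<^sub>R P + u *\<^sub>R Q | s u. s > 0 \<and> u > 0}"

definition Hplus :: "real^3 \<Rightarrow> (real^3) set" where
  "Hplus \<delta> = {x \<in> Vplus. mink x \<delta> \<ge> 0}"

text \<open>Angular position of a point at infinity on the circle at infinity
  (the ray of (1, cos phi, sin phi)).\<close>
definition ang :: "real^3 \<Rightarrow> real" where
  "ang X = Arg2pi (Complex (X$2) (X$3))"

text \<open>Projective coordinate: homogeneous coordinates (cos(phi/2), sin(phi/2)) of the
  coordinate t = tan(phi/2), i.e. of the rational parametrisation
  t \<mapsto> (1+t^2, 1-t^2, 2t) of the isotropic cone.  pdiff R P is the homogeneous
  form of t_R - t_P.\<close>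
definition pcoord :: "real^3 \<Rightarrow> real \<times> real" where
  "pcoord X = (cos (ang X / 2), sin (ang X / 2))"

definition pdiff :: "real^3 \<Rightarrow> real^3 \<Rightarrow> real" where
  "pdiff R P = fst (pcoord P) * snd (pcoord R) - snd (pcoord P) * fst (pcoord R)"

definition cross_ratio :: "real^3 \<Rightarrow> real^3 \<Rightarrow> real^3 \<Rightarrow> real^3 \<Rightarrow> real" where
  "cross_ratio P Q R S = (pdiff R P * pdiff S Q) / (pdiff R Q * pdiff S P)"

definition theta :: "real^3 \<Rightarrow> real^3 \<Rightarrow> real^3 \<Rightarrow> real^3 \<Rightarrow> real" where
  "theta M N A B = ln (cross_ratio M N A B)"

definition cpos :: "real^3 \<Rightarrow> real^3 \<Rightarrow> real" where
  "cpos P X = Arg2pi (Complex (X$2) (X$3) / Complex (P$2) (P$3))"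

text \<open>P, Q, R, S are four consecutive (distinct) points on the circle at infinity,
  in this cyclic order for one of the two orientations.\<close>
definition consecutive4 :: "real^3 \<Rightarrow> real^3 \<Rightarrow> real^3 \<Rightarrow> real^3 \<Rightarrow> bool" where
  "consecutive4 P Q R S \<longleftrightarrow>
     (0 < cpos P Q \<and> cpos P Q < cpos P R \<and> cpos P R < cpos P S) \<or>
     (0 < cpos P S \<and> cpos P S < cpos P R \<and> cpos P R < cpos P Q)"

text \<open>The lines (AB) and (CD) lie in different (open) half-planes bounded by (MN):
  the half-planes are the sets where (x, nu) > 0 resp. < 0 for a normal nu of (MN).\<close>
definition diff_half_planes :: "real^3 \<Rightarrow> real^3 \<Rightarrow> real^3 \<Rightarrow> real^3 \<Rightarrow> real^3 \<Rightarrow> real^3 \<Rightarrow> bool" where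
  "diff_half_planes M N A B C D \<longleftrightarrow>
     (\<exists>\<nu>. \<nu> \<noteq> 0 \<and> mink \<nu> M = 0 \<and> mink \<nu> N = 0 \<and>
          (\<forall>x \<in> line_pts A B. mink x \<nu> > 0) \<and> (\<forall>y \<in> line_pts C D. mink y \<nu> < 0))"

text \<open>Two lines are orthogonal iff their normal (polar) vectors are orthogonal.\<close>
definition lines_orth :: "real^3 \<Rightarrow> real^3 \<Rightarrow> real^3 \<Rightarrow> real^3 \<Rightarrow> bool" where
  "lines_orth P Q R S \<longleftrightarrow>
     (\<exists>n1 n2. n1 \<noteq> 0 \<and> n2 \<noteq> 0 \<and> mink n1 P = 0 \<and> mink n1 Q = 0 \<and>
        mink n2 R = 0 \<and> mink n2 S = 0 \<and> mink n1 n2 = 0)"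

text \<open>X' is the other terminal of the line through X orthogonal to (MN).\<close>
definition other_terminal :: "real^3 \<Rightarrow> real^3 \<Rightarrow> real^3 \<Rightarrow> real^3 \<Rightarrow> bool" where
  "other_terminal M N X X' \<longleftrightarrow>
     at_inf X' \<and> (\<forall>c. X' \<noteq> c *\<^sub>R X) \<and> lines_orth M N X X'"

definition hdist :: "real^3 \<Rightarrow> real^3 \<Rightarrow> real" where
  "hdist x y = arcosh (mink x y / sqrt (mink x x * mink y y))"

definition line_dist :: "real^3 \<Rightarrow> real^3 \<Rightarrow> real^3 \<Rightarrow> real^3 \<Rightarrow> real" where
  "line_dist A B C D = Inf {hdist x y | x y. x \<in> line_pts A B \<and> y \<in> line_pts C D}"

end

(*
  Every point at infinity is the square of a spinor: the isotropic ray with direction angle phi is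
  spanned by Psi(u,u) for u = (cos(phi/2), sin(phi/2)), where Psi = spin_prod is the symmetric
  product of two spinors.  The Minkowski product of Psi(a,b) and Psi(c,d) is [a,c][b,d] + [a,d][b,c]
  in terms of the 2x2 determinants [u,v] = wedge u v.  Hence the normal of the line with ends a, b is
  a multiple of Psi(a,b), whose sign is fixed by the half-plane condition, and
  (delta1, delta2) = 2 ([a,c][b,d] + [a,d][b,c]) / ([a,b][c,d]).
  Minimising the Minkowski product of points on (AB) and (CD) by AM-GM gives the same quotient for
  cosh of the distance.  Finally every cross ratio is a quotient of brackets, C' is the harmonic
  conjugate of C with respect to M and N, and the Pluecker relation
  [a,b][c,d] - [a,c][b,d] + [a,d][b,c] = 0 turns the theta-expression into the same quotient.
*)

theory Submission
  imports Defs
begin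

section \<open>Spinor algebra\<close>

definition wedge :: "real \<times> real \<Rightarrow> real \<times> real \<Rightarrow> real" where
  "wedge u v = fst u * snd v - snd u * fst v"

definition spin_prod :: "real \<times> real \<Rightarrow> real \<times> real \<Rightarrow> real^3" where
  "spin_prod u v = vector [fst u * fst v + snd u * snd v, fst u * fst v - snd u * snd v,
                           fst u * snd v + snd u * fst v]"

lemma wedge_antisym: "wedge v u = - wedge u v"
  by (simp add: wedge_def)

lemma wedge_self [simp]: "wedge u u = 0"
  by (simp add: wedge_def)

lemma wedge_scaleR: "wedge (c *\<^sub>R u) (d *\<^sub>R v) = c * d * wedge u v"
  by (simp add: wedge_def algebra_simps)

lemma wedge_pluecker: "wedge a b * wedge c d + wedge a d * wedge b c = wedge a c * wedge b d"
  by (simp add: wedge_def algebra_simps)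

lemma wedge_cramer: "wedge m n *\<^sub>R e = wedge m e *\<^sub>R n - wedge n e *\<^sub>R m"
  by (simp add: wedge_def prod_eq_iff algebra_simps)

lemma wedge_eq_0_imp_parallel:
  assumes "wedge c e = 0" "c \<noteq> 0"
  obtains t where "e = t *\<^sub>R c"
proof
  have "(fst c)\<^sup>2 + (snd c)\<^sup>2 \<noteq> 0"
    using assms(2) by (simp add: prod_eq_iff)
  then show "e = ((fst c * fst e + snd c * snd e) / ((fst c)\<^sup>2 + (snd c)\<^sup>2)) *\<^sub>R c"
    using assms(1) unfolding wedge_def
    by (simp add: prod_eq_iff field_simps power2_eq_square)
qed

lemma mink_commute: "mink x y = mink y x"
  by (simp add: mink_def algebra_simps)

lemma mink_add_left: "mink (x + y) z = mink x z + mink y z"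
  by (simp add: mink_def algebra_simps)

lemma mink_add_right: "mink x (y + z) = mink x y + mink x z"
  by (simp add: mink_def algebra_simps)

lemma mink_scaleR_left: "mink (c *\<^sub>R x) y = c * mink x y"
  by (simp add: mink_def algebra_simps)

lemma mink_scaleR_right: "mink x (c *\<^sub>R y) = c * mink x y"
  by (simp add: mink_def algebra_simps)

lemma mink_spin_prod:
  "mink (spin_prod a b) (spin_prod c d) = wedge a c * wedge b d + wedge a d * wedge b c"
  by (simp add: mink_def spin_prod_def wedge_def algebra_simps)

lemma mink_spin_prod_self: "mink (spin_prod a b) (spin_prod a b) = - (wedge a b)\<^sup>2"
  by (simp add: mink_spin_prod wedge_antisym[of b a] power2_eq_square)

lemma mink_null_spin_prod:
  "mink (l *\<^sub>R spin_prod x x) (spin_prod a b) = 2 * l * wedge x a * wedge x b"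
  by (simp add: mink_scaleR_left mink_spin_prod)

lemma mink_null_spin_prod_pair:
  "mink (l *\<^sub>R spin_prod x x) (k *\<^sub>R spin_prod m n) = 2 * l * k * (wedge m x * wedge n x)"
  by (simp add: mink_scaleR_right mink_null_spin_prod wedge_antisym[of x])

lemma spin_prod_self_scaleR: "spin_prod (t *\<^sub>R c) (t *\<^sub>R c) = t\<^sup>2 *\<^sub>R spin_prod c c"
  by (simp add: spin_prod_def vec_eq_iff forall_3 power2_eq_square algebra_simps)

lemma spin_prod_expansion:
  "(2 * wedge a b ^ 2) *\<^sub>R V =
     mink V (spin_prod b b) *\<^sub>R spin_prod a a + mink V (spin_prod a a) *\<^sub>R spin_prod b b
     - (2 * mink V (spin_prod a b)) *\<^sub>R spin_prod a b"
  by (simp add: vec_eq_iff forall_3 mink_def spin_prod_def wedge_def algebra_simps power2_eq_square)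

lemma orthogonal_to_two_null_spin_prods:
  assumes "wedge a b \<noteq> 0" "mink V (spin_prod a a) = 0" "mink V (spin_prod b b) = 0"
  shows "V = (- mink V (spin_prod a b) / wedge a b ^ 2) *\<^sub>R spin_prod a b"
proof -
  have "(2 * wedge a b ^ 2) *\<^sub>R V = (- 2 * mink V (spin_prod a b)) *\<^sub>R spin_prod a b"
    using spin_prod_expansion[of a b V] assms(2,3) by simp
  then show ?thesis
    using assms(1) by (simp add: vec_eq_iff field_simps)
qed

section \<open>Distance between lines with ideal end points\<close>

definition cosh_hdist :: "real^3 \<Rightarrow> real^3 \<Rightarrow> real" where
  "cosh_hdist x y = mink x y / sqrt (mink x x * mink y y)"

lemma hdist_eq_arcosh: "hdist x y = arcosh (cosh_hdist x y)"
  by (simp add: hdist_def cosh_hdist_def)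

lemma cosh_hdist_null_lines:
  assumes "mink A A = 0" "mink B B = 0" "mink C C = 0" "mink D D = 0"
    and "0 \<le> s * u * p * q" "0 \<le> mink A B * mink C D"
  shows "cosh_hdist (s *\<^sub>R A + u *\<^sub>R B) (p *\<^sub>R C + q *\<^sub>R D) =
    (s * p * mink A C + s * q * mink A D + u * p * mink B C + u * q * mink B D)
      / (2 * sqrt (s * u * p * q) * sqrt (mink A B * mink C D))"
proof -
  let ?x = "s *\<^sub>R A + u *\<^sub>R B" and ?y = "p *\<^sub>R C + q *\<^sub>R D"
  have "mink ?x ?x = 2 * s * u * mink A B" "mink ?y ?y = 2 * p * q * mink C D"
    using assms(1-4) by (simp_all add: mink_add_left mink_add_right mink_scaleR_left
        mink_scaleR_right mink_commute[of B A] mink_commute[of D C] algebra_simps)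
  then have "sqrt (mink ?x ?x * mink ?y ?y) = 2 * sqrt (s * u * p * q) * sqrt (mink A B * mink C D)"
    by (simp add: real_sqrt_mult[symmetric] ac_simps)
      (simp add: real_sqrt_mult)
  moreover have "mink ?x ?y = s * p * mink A C + s * q * mink A D + u * p * mink B C + u * q * mink B D"
    by (simp add: mink_add_left mink_add_right mink_scaleR_left mink_scaleR_right algebra_simps)
  ultimately show ?thesis
    unfolding cosh_hdist_def by simp
qed

lemma cosh_hdist_null_lines_ge:
  assumes "mink A A = 0" "mink B B = 0" "mink C C = 0" "mink D D = 0"
    and "0 < mink A B" "0 < mink C D" "0 < mink A C" "0 < mink A D" "0 < mink B C" "0 < mink B D"
    and "0 < s" "0 < u" "0 < p" "0 < q"
  shows "(sqrt (mink A C * mink B D) + sqrt (mink A D * mink B C)) / sqrt (mink A B * mink C D)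
    \<le> cosh_hdist (s *\<^sub>R A + u *\<^sub>R B) (p *\<^sub>R C + q *\<^sub>R D)"
proof -
  define S where "S = sqrt (s * u * p * q)"
  define K where "K = sqrt (mink A B * mink C D)"
  have "2 * S * sqrt (mink A C * mink B D) \<le> s * p * mink A C + u * q * mink B D"
    using arith_geo_mean_sqrt[of "s * p * mink A C" "u * q * mink B D"] assms(5-14)
    by (simp add: S_def real_sqrt_mult[symmetric] algebra_simps)
  moreover have "2 * S * sqrt (mink A D * mink B C) \<le> s * q * mink A D + u * p * mink B C"
    using arith_geo_mean_sqrt[of "s * q * mink A D" "u * p * mink B C"] assms(5-14)
    by (simp add: S_def real_sqrt_mult[symmetric] algebra_simps)
  moreover have "0 < S" "0 < K"
    using assms(5-14) by (simp_all add: S_def K_def)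
  moreover have "(sqrt (mink A C * mink B D) + sqrt (mink A D * mink B C)) / K
      = (2 * S * sqrt (mink A C * mink B D) + 2 * S * sqrt (mink A D * mink B C)) / (2 * S * K)"
    using \<open>0 < S\<close> \<open>0 < K\<close> by (simp add: field_simps)
  ultimately show ?thesis
    using assms(1-6,11-14) unfolding K_def[symmetric]
    by (simp add: cosh_hdist_null_lines S_def[symmetric] K_def[symmetric] divide_right_mono)
qed

lemma cosh_hdist_null_lines_attained:
  assumes "mink A A = 0" "mink B B = 0" "mink C C = 0" "mink D D = 0"
    and "0 < mink A B" "0 < mink C D" "0 < mink A C" "0 < mink A D" "0 < mink B C" "0 < mink B D"
  obtains s u p q where "0 < s" "0 < u" "0 < p" "0 < q"
    "cosh_hdist (s *\<^sub>R A + u *\<^sub>R B) (p *\<^sub>R C + q *\<^sub>R D)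
      = (sqrt (mink A C * mink B D) + sqrt (mink A D * mink B C)) / sqrt (mink A B * mink C D)"
proof -
  txt \<open>Equality case of both AM-GM estimates in \<open>cosh_hdist_null_lines_ge\<close>.\<close>
  define \<alpha> where "\<alpha> = sqrt (mink A C)"
  define \<beta> where "\<beta> = sqrt (mink B D)"
  define \<gamma> where "\<gamma> = sqrt (mink A D)"
  define \<epsilon> where "\<epsilon> = sqrt (mink B C)"
  have pos: "0 < \<alpha>" "0 < \<beta>" "0 < \<gamma>" "0 < \<epsilon>"
    using assms(7-10) by (simp_all add: \<alpha>_def \<beta>_def \<gamma>_def \<epsilon>_def)
  have sq: "mink A C = \<alpha>\<^sup>2" "mink B D = \<beta>\<^sup>2" "mink A D = \<gamma>\<^sup>2" "mink B C = \<epsilon>\<^sup>2"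
    using assms(7-10) by (simp_all add: \<alpha>_def \<beta>_def \<gamma>_def \<epsilon>_def)
  let ?s = "\<beta> * \<epsilon>" and ?u = "\<alpha> * \<gamma>" and ?p = "\<beta> * \<gamma>" and ?q = "\<alpha> * \<epsilon>"
  have "?s * ?u * ?p * ?q = (\<alpha> * \<beta> * \<gamma> * \<epsilon>)\<^sup>2"
    by (simp add: power2_eq_square)
  then have "cosh_hdist (?s *\<^sub>R A + ?u *\<^sub>R B) (?p *\<^sub>R C + ?q *\<^sub>R D)
    = (?s * ?p * mink A C + ?s * ?q * mink A D + ?u * ?p * mink B C + ?u * ?q * mink B D)
      / (2 * (\<alpha> * \<beta> * \<gamma> * \<epsilon>) * sqrt (mink A B * mink C D))"
    using pos assms(1-6) by (simp add: cosh_hdist_null_lines)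
  also have "\<dots>
      = (sqrt (mink A C * mink B D) + sqrt (mink A D * mink B C)) / sqrt (mink A B * mink C D)"
    unfolding sq using pos assms(5,6) by (simp add: real_sqrt_mult field_simps power2_eq_square)
  finally show thesis
    using pos by (intro that) simp_all
qed

lemma line_dist_null_lines:
  assumes null: "mink A A = 0" "mink B B = 0" "mink C C = 0" "mink D D = 0"
    and pos: "0 < mink A B" "0 < mink C D" "0 < mink A C" "0 < mink A D" "0 < mink B C" "0 < mink B D"
    and ptolemy: "sqrt (mink A B * mink C D) \<le> sqrt (mink A C * mink B D) + sqrt (mink A D * mink B C)"
  shows "line_dist A B C D =
    arcosh ((sqrt (mink A C * mink B D) + sqrt (mink A D * mink B C)) / sqrt (mink A B * mink C D))"
    (is "_ = arcosh ?r")
proof -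
  have "1 \<le> ?r"
    using ptolemy pos by simp
  have lower: "arcosh ?r \<le> z" if z_in: "z \<in> {hdist x y | x y. x \<in> line_pts A B \<and> y \<in> line_pts C D}"
    for z
  proof -
    obtain x y where "z = hdist x y" "x \<in> line_pts A B" "y \<in> line_pts C D"
      using z_in by blast
    moreover obtain s u where "x = s *\<^sub>R A + u *\<^sub>R B" "0 < s" "0 < u"
      using \<open>x \<in> line_pts A B\<close> unfolding line_pts_def by blast
    moreover obtain p q where "y = p *\<^sub>R C + q *\<^sub>R D" "0 < p" "0 < q"
      using \<open>y \<in> line_pts C D\<close> unfolding line_pts_def by blast
    ultimately have "z = arcosh (cosh_hdist x y)" "?r \<le> cosh_hdist x y"
      using cosh_hdist_null_lines_ge[OF null pos] by (simp_all add: hdist_eq_arcosh)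
    then show ?thesis
      using \<open>1 \<le> ?r\<close> by (simp add: not_less[symmetric])
  qed
  obtain s u p q where "0 < s" "0 < u" "0 < p" "0 < q"
    and "cosh_hdist (s *\<^sub>R A + u *\<^sub>R B) (p *\<^sub>R C + q *\<^sub>R D) = ?r"
    using cosh_hdist_null_lines_attained[OF null pos] by blast
  then have "arcosh ?r = hdist (s *\<^sub>R A + u *\<^sub>R B) (p *\<^sub>R C + q *\<^sub>R D)"
    "s *\<^sub>R A + u *\<^sub>R B \<in> line_pts A B" "p *\<^sub>R C + q *\<^sub>R D \<in> line_pts C D"
    unfolding line_pts_def by (auto simp: hdist_eq_arcosh)
  then have "arcosh ?r \<in> {hdist x y | x y. x \<in> line_pts A B \<and> y \<in> line_pts C D}"
    by blast
  then show ?thesis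
    unfolding line_dist_def using lower by (rule cInf_eq_minimum)
qed

section \<open>Points at infinity as squares of spinors\<close>

text \<open>Half-angles are measured from the reference point \<open>M\<close>: they then lie in an interval of
  length \<open>\<pi>\<close>, so the sign of a bracket of two spinors records the order of \<open>cpos M\<close>.\<close>

definition spinor :: "real^3 \<Rightarrow> real^3 \<Rightarrow> real \<times> real" where
  "spinor M X = (cos ((ang M + cpos M X) / 2), sin ((ang M + cpos M X) / 2))"

lemma spinor_nonzero: "spinor M X \<noteq> 0"
  unfolding spinor_def prod_eq_iff
  by (metis fst_conv fst_zero sin_cos_squared_add snd_conv snd_zero zero_neq_one zero_power2 add_0)

lemma at_inf_cmod: "at_inf X \<Longrightarrow> cmod (Complex (X$2) (X$3)) = X$1"
  unfolding at_inf_def mink_def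
  by (auto simp: complex_norm power2_eq_square intro: real_sqrt_unique)

lemma at_inf_polar:
  assumes "at_inf M" "at_inf X"
  shows "X$2 = X$1 * cos (ang M + cpos M X)" "X$3 = X$1 * sin (ang M + cpos M X)"
proof -
  define zM where "zM = Complex (M$2) (M$3)"
  define q where "q = Complex (X$2) (X$3) / zM"
  have M1: "M$1 > 0"
    using assms(1) unfolding at_inf_def by simp
  have nM: "cmod zM = M$1"
    using at_inf_cmod[OF assms(1)] by (simp add: zM_def)
  then have "zM \<noteq> 0"
    using M1 by auto
  have "cmod q = X$1 / M$1"
    using at_inf_cmod[OF assms(2)] nM by (simp add: q_def norm_divide)
  then have q: "Re q = (X$1 / M$1) * cos (cpos M X)" "Im q = (X$1 / M$1) * sin (cpos M X)"
    using cos_Arg2pi[of q] sin_Arg2pi[of q] by (auto simp: cpos_def q_def zM_def)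
  have zM: "Re zM = M$1 * cos (ang M)" "Im zM = M$1 * sin (ang M)"
    using cos_Arg2pi[of zM] sin_Arg2pi[of zM] nM by (auto simp: ang_def zM_def)
  have "Complex (X$2) (X$3) = zM * q"
    using \<open>zM \<noteq> 0\<close> by (simp add: q_def)
  then have "X$2 = Re zM * Re q - Im zM * Im q" "X$3 = Re zM * Im q + Im zM * Re q"
    by (metis complex.sel times_complex.sel)+
  then show "X$2 = X$1 * cos (ang M + cpos M X)" "X$3 = X$1 * sin (ang M + cpos M X)"
    unfolding q zM using M1 by (auto simp: cos_add sin_add field_simps)
qed

lemma at_inf_eq_spin_prod:
  assumes "at_inf M" "at_inf X"
  shows "X = X$1 *\<^sub>R spin_prod (spinor M X) (spinor M X)"
proof -
  define t where "t = (ang M + cpos M X) / 2"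
  have "ang M + cpos M X = 2 * t"
    by (simp add: t_def)
  then have "X$2 = X$1 * ((cos t)\<^sup>2 - (sin t)\<^sup>2)" "X$3 = X$1 * (2 * sin t * cos t)"
    using at_inf_polar[OF assms] by (simp_all add: cos_double sin_double)
  then show ?thesis
    by (simp add: vec_eq_iff forall_3 spin_prod_def spinor_def t_def[symmetric] power2_eq_square
        algebra_simps)
qed

lemma cpos_self: "at_inf M \<Longrightarrow> cpos M M = 0"
  using at_inf_cmod[of M] Arg2pi_of_real[of 1] unfolding at_inf_def cpos_def by auto

lemma wedge_spinor: "wedge (spinor M X) (spinor M Y) = sin ((cpos M Y - cpos M X) / 2)"
proof -
  have "(cpos M Y - cpos M X) / 2 = (ang M + cpos M Y) / 2 - (ang M + cpos M X) / 2"
    by (simp add: field_simps)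
  then show ?thesis
    unfolding wedge_def spinor_def by (simp only: sin_diff fst_conv snd_conv) (simp add: algebra_simps)
qed

lemma wedge_spinor_pos:
  assumes "cpos M X < cpos M Y"
  shows "0 < wedge (spinor M X) (spinor M Y)"
proof -
  have "0 \<le> cpos M X" "cpos M Y < 2 * pi"
    using Arg2pi unfolding cpos_def by auto
  then show ?thesis
    unfolding wedge_spinor using assms by (intro sin_gt_zero) auto
qed

lemma wedge_spinor_neg: "cpos M Y < cpos M X \<Longrightarrow> wedge (spinor M X) (spinor M Y) < 0"
  using wedge_spinor_pos[of M Y X] by (simp add: wedge_antisym[of "spinor M X"])

lemma wedge_spinor_self_pos: "at_inf M \<Longrightarrow> 0 < cpos M X \<Longrightarrow> 0 < wedge (spinor M M) (spinor M X)"
  by (rule wedge_spinor_pos) (simp add: cpos_self)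

lemma half_angle_sign:
  fixes a b :: real
  assumes "cos (2 * a) = cos (2 * b)" "sin (2 * a) = sin (2 * b)"
  obtains e where "e = 1 \<or> e = -1" "cos a = e * cos b" "sin a = e * sin b"
proof -
  have "cos (2 * (a - b)) = cos (2 * a) * cos (2 * b) + sin (2 * a) * sin (2 * b)"
    by (simp add: right_diff_distrib cos_diff)
  also have "\<dots> = 1"
    using assms sin_cos_squared_add[of "2 * b"] by (simp add: power2_eq_square)
  finally have "(cos (a - b))\<^sup>2 = 1"
    unfolding cos_double_cos by simp
  moreover from this have "sin (a - b) = 0"
    using sin_cos_squared_add[of "a - b"] by simp
  ultimately show thesis
    using that[of "cos (a - b)"] cos_add[of b "a - b"] sin_add[of b "a - b"]
    by (auto simp: power2_eq_1_iff)
qed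

lemma pcoord_eq_sign_spinor:
  assumes "at_inf M" "at_inf X"
  obtains e where "e = 1 \<or> e = -1" "pcoord X = e *\<^sub>R spinor M X"
proof -
  have "X$1 > 0"
    using assms(2) unfolding at_inf_def by simp
  moreover have "X$2 = X$1 * cos (ang X)" "X$3 = X$1 * sin (ang X)"
    using cos_Arg2pi[of "Complex (X$2) (X$3)"] sin_Arg2pi[of "Complex (X$2) (X$3)"]
      at_inf_cmod[OF assms(2)] by (auto simp: ang_def)
  ultimately have "cos (ang X) = cos (ang M + cpos M X)" "sin (ang X) = sin (ang M + cpos M X)"
    using at_inf_polar[OF assms] by simp_all
  moreover have halves: "2 * (ang X / 2) = ang X" "2 * ((ang M + cpos M X) / 2) = ang M + cpos M X"
    by simp_all
  ultimately have "cos (2 * (ang X / 2)) = cos (2 * ((ang M + cpos M X) / 2))"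
    "sin (2 * (ang X / 2)) = sin (2 * ((ang M + cpos M X) / 2))"
    unfolding halves by simp_all
  then show thesis
    by (rule half_angle_sign) (auto simp: pcoord_def spinor_def intro: that)
qed

lemma cross_ratio_spinor:
  assumes "at_inf M" "at_inf P" "at_inf Q" "at_inf R" "at_inf S"
  shows "cross_ratio P Q R S =
    wedge (spinor M P) (spinor M R) * wedge (spinor M Q) (spinor M S) /
    (wedge (spinor M Q) (spinor M R) * wedge (spinor M P) (spinor M S))"
proof -
  obtain eP eQ eR eS where "eP = 1 \<or> eP = -1" "pcoord P = eP *\<^sub>R spinor M P"
    "eQ = 1 \<or> eQ = -1" "pcoord Q = eQ *\<^sub>R spinor M Q"
    "eR = 1 \<or> eR = -1" "pcoord R = eR *\<^sub>R spinor M R"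
    "eS = 1 \<or> eS = -1" "pcoord S = eS *\<^sub>R spinor M S"
    using pcoord_eq_sign_spinor assms by metis
  then show ?thesis
    unfolding cross_ratio_def pdiff_def wedge_def[symmetric] by (auto simp: wedge_scaleR)
qed

section \<open>Lines and their normals in spinor coordinates\<close>

lemma unit_normal_spin_prod:
  assumes "wedge a b \<noteq> 0" "mink \<delta> (spin_prod a a) = 0" "mink \<delta> (spin_prod b b) = 0"
    and "mink \<delta> \<delta> = -2"
  obtains k where "\<delta> = k *\<^sub>R spin_prod a b" "(k * wedge a b)\<^sup>2 = 2"
proof -
  define k where "k = - mink \<delta> (spin_prod a b) / (wedge a b)\<^sup>2"
  have "\<delta> = k *\<^sub>R spin_prod a b"
    unfolding k_def using assms(1-3) by (rule orthogonal_to_two_null_spin_prods)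
  moreover from this have "(k * wedge a b)\<^sup>2 = 2"
    using assms(4) by (simp add: mink_scaleR_left mink_scaleR_right mink_spin_prod_self
        power2_eq_square algebra_simps)
  ultimately show thesis
    by (rule that)
qed

lemma Hplus_normal_pos:
  assumes "M = lM *\<^sub>R spin_prod m m" "N = lN *\<^sub>R spin_prod n n" "\<delta> = k *\<^sub>R spin_prod a b"
    and "line_pts M N \<subseteq> Hplus \<delta>" "0 < lM" "0 < lN" "k \<noteq> 0"
    and "0 < wedge m a * wedge m b" "0 < wedge n a * wedge n b"
  shows "0 < k"
proof -
  have "M + N \<in> line_pts M N"
    unfolding line_pts_def by (intro CollectI exI[of _ 1]) simp
  then have "0 \<le> mink (M + N) \<delta>"
    using assms(4) by (auto simp: Hplus_def)
  moreover have "mink (M + N) \<delta>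
      = 2 * k * (lM * (wedge m a * wedge m b) + lN * (wedge n a * wedge n b))"
    unfolding assms(1-3) by (simp add: mink_add_left mink_scaleR_right mink_null_spin_prod algebra_simps)
  moreover have "0 < lM * (wedge m a * wedge m b) + lN * (wedge n a * wedge n b)"
    using assms(5,6,8,9) by (simp add: add_pos_pos)
  ultimately show ?thesis
    using assms(7) by (simp add: zero_le_mult_iff)
qed

lemma normal_eq_spin_prod:
  assumes "A = lA *\<^sub>R spin_prod a a" "B = lB *\<^sub>R spin_prod b b" "lA \<noteq> 0" "lB \<noteq> 0"
    and "wedge a b \<noteq> 0" "mink \<delta> A = 0" "mink \<delta> B = 0" "mink \<delta> \<delta> = -2"
    and "M = lM *\<^sub>R spin_prod m m" "N = lN *\<^sub>R spin_prod n n" "0 < lM" "0 < lN"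
    and "line_pts M N \<subseteq> Hplus \<delta>"
    and "0 < wedge m a * wedge m b" "0 < wedge n a * wedge n b"
  obtains k where "0 < k" "\<delta> = k *\<^sub>R spin_prod a b" "(k * wedge a b)\<^sup>2 = 2"
proof -
  have null: "mink \<delta> (spin_prod a a) = 0" "mink \<delta> (spin_prod b b) = 0"
    using assms(1-4,6,7) by (simp_all add: mink_scaleR_right)
  obtain k where k: "\<delta> = k *\<^sub>R spin_prod a b" "(k * wedge a b)\<^sup>2 = 2"
    by (rule unit_normal_spin_prod[OF assms(5) null assms(8)])
  moreover have "0 < k"
    using Hplus_normal_pos[OF assms(9,10) k(1) assms(13,11,12) _ assms(14,15)] k(2)
    by (cases "k = 0") auto
  ultimately show thesis
    using that by blast
qed

lemma mink_unit_normals: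
  assumes "0 < k1" "0 < k2" "(k1 * wedge a b)\<^sup>2 = 2" "(k2 * wedge c d)\<^sup>2 = 2"
    and "0 < wedge a b * wedge c d"
  shows "mink (k1 *\<^sub>R spin_prod a b) (k2 *\<^sub>R spin_prod c d)
    = 2 * (wedge a c * wedge b d + wedge a d * wedge b c) / (wedge a b * wedge c d)"
proof -
  have "(k1 * k2 * (wedge a b * wedge c d))\<^sup>2 = (k1 * wedge a b)\<^sup>2 * (k2 * wedge c d)\<^sup>2"
    by (simp add: power_mult_distrib)
  then have "(k1 * k2 * (wedge a b * wedge c d))\<^sup>2 = 2\<^sup>2"
    using assms(3,4) by simp
  then have "k1 * k2 * (wedge a b * wedge c d) = 2"
    by (rule power2_eq_imp_eq) (use assms(1,2,5) in simp_all)
  then have "k1 * k2 = 2 / (wedge a b * wedge c d)"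
    using assms(5) by (auto simp: eq_divide_eq mult.assoc)
  moreover have "mink (k1 *\<^sub>R spin_prod a b) (k2 *\<^sub>R spin_prod c d)
      = (k1 * k2) * (wedge a c * wedge b d + wedge a d * wedge b c)"
    by (simp add: mink_scaleR_left mink_scaleR_right mink_spin_prod)
  ultimately show ?thesis
    by simp
qed

lemma mink_null_null_spin_prod:
  "mink (l *\<^sub>R spin_prod x x) (l' *\<^sub>R spin_prod y y) = 2 * l * l' * (wedge x y)\<^sup>2"
  by (simp add: mink_scaleR_right mink_null_spin_prod power2_eq_square)

lemma sqrt_mink_null_spin_prod_mult:
  assumes "0 \<le> l1 * l2 * l3 * l4" "0 < wedge x1 y1 * wedge x2 y2"
  shows "sqrt (mink (l1 *\<^sub>R spin_prod x1 x1) (l2 *\<^sub>R spin_prod y1 y1)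
      * mink (l3 *\<^sub>R spin_prod x2 x2) (l4 *\<^sub>R spin_prod y2 y2))
    = 2 * sqrt (l1 * l2 * l3 * l4) * (wedge x1 y1 * wedge x2 y2)"
proof -
  have "mink (l1 *\<^sub>R spin_prod x1 x1) (l2 *\<^sub>R spin_prod y1 y1)
      * mink (l3 *\<^sub>R spin_prod x2 x2) (l4 *\<^sub>R spin_prod y2 y2)
      = (2 * sqrt (l1 * l2 * l3 * l4) * (wedge x1 y1 * wedge x2 y2))\<^sup>2"
    using assms(1) by (simp add: mink_null_null_spin_prod power_mult_distrib algebra_simps)
  then show ?thesis
    using assms by simp
qed

lemma line_dist_spin_prod:
  assumes "A = lA *\<^sub>R spin_prod a a" "B = lB *\<^sub>R spin_prod b b"
    and "C = lC *\<^sub>R spin_prod c c" "D = lD *\<^sub>R spin_prod d d"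
    and "0 < lA" "0 < lB" "0 < lC" "0 < lD"
    and "0 < wedge a b * wedge c d" "0 < wedge a d * wedge b c"
  shows "line_dist A B C D
    = arcosh ((wedge a c * wedge b d + wedge a d * wedge b c) / (wedge a b * wedge c d))"
proof -
  define L where "L = sqrt (lA * lB * lC * lD)"
  have pluecker: "wedge a c * wedge b d = wedge a b * wedge c d + wedge a d * wedge b c"
    by (simp add: wedge_pluecker)
  then have "0 < wedge a c * wedge b d"
    using assms(9,10) by simp
  then have "wedge a b \<noteq> 0" "wedge c d \<noteq> 0" "wedge a c \<noteq> 0" "wedge a d \<noteq> 0"
    "wedge b c \<noteq> 0" "wedge b d \<noteq> 0"
    using assms(9,10) by auto
  then have pos: "0 < mink A B" "0 < mink C D" "0 < mink A C" "0 < mink A D"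
    "0 < mink B C" "0 < mink B D"
    using assms(5-8) unfolding assms(1-4) by (simp_all add: mink_null_null_spin_prod)
  have "sqrt (mink A C * mink B D) = 2 * L * (wedge a c * wedge b d)"
    using sqrt_mink_null_spin_prod_mult[of lA lC lB lD a c b d] assms(5-8)
      \<open>0 < wedge a c * wedge b d\<close>
    unfolding assms(1-4) by (simp add: L_def ac_simps)
  moreover have "sqrt (mink A D * mink B C) = 2 * L * (wedge a d * wedge b c)"
    using sqrt_mink_null_spin_prod_mult[of lA lD lB lC a d b c] assms(5-10)
    unfolding assms(1-4) by (simp add: L_def ac_simps)
  moreover have "sqrt (mink A B * mink C D) = 2 * L * (wedge a b * wedge c d)"
    using sqrt_mink_null_spin_prod_mult[of lA lB lC lD a b c d] assms(5-10)
    unfolding assms(1-4) by (simp add: L_def ac_simps)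
  moreover have "mink A A = 0" "mink B B = 0" "mink C C = 0" "mink D D = 0"
    unfolding assms(1-4) by (simp_all add: mink_null_null_spin_prod)
  moreover have "0 < L" "wedge a b * wedge c d \<le> wedge a c * wedge b d + wedge a d * wedge b c"
    using assms(5-8,10) pluecker by (simp_all add: L_def)
  ultimately show ?thesis
    using line_dist_null_lines[of A B C D] pos
    by (simp add: distrib_left[symmetric] mult_left_mono)
qed

text \<open>The first conclusion says that the cross ratio \<open>[M,N,C,C']\<close> is \<open>-1\<close>.\<close>

lemma other_terminal_harmonic:
  assumes "other_terminal M N C C'"
    and "M = lM *\<^sub>R spin_prod m m" "N = lN *\<^sub>R spin_prod n n"
    and "C = lC *\<^sub>R spin_prod c c" "C' = lE *\<^sub>R spin_prod e e"
    and "lM \<noteq> 0" "lN \<noteq> 0" "lC \<noteq> 0" "c \<noteq> 0" "e \<noteq> 0"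
    and "wedge m n \<noteq> 0" "wedge m c \<noteq> 0"
  shows "wedge m c * wedge n e = - (wedge m e * wedge n c)" "wedge m e \<noteq> 0"
proof -
  obtain \<nu>1 \<nu>2 where \<nu>: "\<nu>1 \<noteq> 0" "\<nu>2 \<noteq> 0"
    "mink \<nu>1 (spin_prod m m) = 0" "mink \<nu>1 (spin_prod n n) = 0"
    "mink \<nu>2 (spin_prod c c) = 0" "mink \<nu>2 (spin_prod e e) = 0" "mink \<nu>1 \<nu>2 = 0"
    and not_C: "\<forall>t. lE *\<^sub>R spin_prod e e \<noteq> t *\<^sub>R (lC *\<^sub>R spin_prod c c)"
    using assms(1-8) unfolding other_terminal_def lines_orth_def
    by (auto simp: mink_scaleR_right)
  have "wedge c e \<noteq> 0"
  proof
    assume "wedge c e = 0"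
    then obtain t where "e = t *\<^sub>R c"
      using assms(9) by (rule wedge_eq_0_imp_parallel)
    then have "lE *\<^sub>R spin_prod e e = (lE * t\<^sup>2 / lC) *\<^sub>R (lC *\<^sub>R spin_prod c c)"
      using assms(8) by (simp add: spin_prod_self_scaleR)
    then show False
      using not_C by blast
  qed
  obtain j1 j2 where "\<nu>1 = j1 *\<^sub>R spin_prod m n" "\<nu>2 = j2 *\<^sub>R spin_prod c e"
    using orthogonal_to_two_null_spin_prods \<nu>(3-6) \<open>wedge c e \<noteq> 0\<close> assms(11) by metis
  moreover from this have "j1 \<noteq> 0" "j2 \<noteq> 0"
    using \<nu>(1,2) by auto
  ultimately show harmonic: "wedge m c * wedge n e = - (wedge m e * wedge n c)"
    using \<nu>(7) by (simp add: mink_scaleR_left mink_scaleR_right mink_spin_prod)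
  show "wedge m e \<noteq> 0"
  proof
    assume "wedge m e = 0"
    then have "wedge n e = 0"
      using harmonic assms(12) by simp
    then show False
      using wedge_cramer[of m n e] \<open>wedge m e = 0\<close> assms(10,11) by simp
  qed
qed

text \<open>A point \<open>l *\<^sub>R spin_prod x x\<close> lies on the side of the line \<open>(MN)\<close> given by the sign of
  \<open>l [m,x] [n,x]\<close>.\<close>

lemma opposite_sides_spin_prod:
  assumes "diff_half_planes M N A B C D"
    and "M = lM *\<^sub>R spin_prod m m" "N = lN *\<^sub>R spin_prod n n"
    and "A = lA *\<^sub>R spin_prod a a" "B = lB *\<^sub>R spin_prod b b"
    and "C = lC *\<^sub>R spin_prod c c" "D = lD *\<^sub>R spin_prod d d"
    and "lM \<noteq> 0" "lN \<noteq> 0" "wedge m n \<noteq> 0"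
  shows "(lA * (wedge m a * wedge n a) + lB * (wedge m b * wedge n b))
       * (lC * (wedge m c * wedge n c) + lD * (wedge m d * wedge n d)) < 0"
proof -
  obtain \<nu> where "mink \<nu> M = 0" "mink \<nu> N = 0"
    and AB: "\<forall>x \<in> line_pts A B. 0 < mink x \<nu>" and CD: "\<forall>y \<in> line_pts C D. mink y \<nu> < 0"
    using assms(1) unfolding diff_half_planes_def by blast
  then obtain k where \<nu>: "\<nu> = k *\<^sub>R spin_prod m n"
    using orthogonal_to_two_null_spin_prods assms(2,3,8-10) by (metis mink_scaleR_right mult_eq_0_iff)
  have "A + B \<in> line_pts A B" "C + D \<in> line_pts C D"
    unfolding line_pts_def by (intro CollectI exI[of _ 1]; simp)+
  then have "0 < 2 * k * (lA * (wedge m a * wedge n a) + lB * (wedge m b * wedge n b))"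
    "2 * k * (lC * (wedge m c * wedge n c) + lD * (wedge m d * wedge n d)) < 0"
    using AB CD unfolding \<nu> assms(4-7)
    by (auto simp: mink_add_left mink_null_spin_prod_pair algebra_simps)
  then show ?thesis
    by (auto simp: zero_less_mult_iff mult_less_0_iff)
qed

section \<open>Half-logarithms of cross ratios\<close>

lemma cosh_half_ln: "0 < x \<Longrightarrow> cosh (ln x / 2) = (x + 1) / (2 * sqrt x)"
  by (simp add: ln_sqrt[symmetric] cosh_ln_real field_simps)

lemma sinh_half_ln: "0 < x \<Longrightarrow> sinh (ln x / 2) = (x - 1) / (2 * sqrt x)"
  by (simp add: ln_sqrt[symmetric] sinh_ln_real field_simps)

lemma cosh_sinh_half_ln_ratio:
  fixes x1 x2 x3 :: real
  assumes "0 < x1" "0 < x2" "0 < x3"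
  shows "4 * (cosh ((ln x1 + ln x3) / 2) * cosh ((ln x2 - ln x3) / 2))
           / (sinh (ln x1 / 2) * sinh (ln x2 / 2))
       = 4 * ((x1 * x3 + 1) * (x2 / x3 + 1)) / ((x1 - 1) * (x2 - 1))"
proof -
  have "ln x1 + ln x3 = ln (x1 * x3)" "ln x2 - ln x3 = ln (x2 / x3)"
    using assms by (simp_all add: ln_mult ln_div)
  then have cosh_eq: "cosh ((ln x1 + ln x3) / 2) = (x1 * x3 + 1) / (2 * sqrt (x1 * x3))"
    "cosh ((ln x2 - ln x3) / 2) = (x2 / x3 + 1) / (2 * sqrt (x2 / x3))"
    using assms by (simp_all only: cosh_half_ln mult_pos_pos divide_pos_pos)
  have "0 < sqrt x1" "0 < sqrt x2" "0 < sqrt x3"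
    using assms by simp_all
  then have "cosh ((ln x1 + ln x3) / 2) * cosh ((ln x2 - ln x3) / 2)
      = ((x1 * x3 + 1) * (x2 / x3 + 1)) / (4 * sqrt x1 * sqrt x2)"
    "sinh (ln x1 / 2) * sinh (ln x2 / 2) = ((x1 - 1) * (x2 - 1)) / (4 * sqrt x1 * sqrt x2)"
    unfolding cosh_eq using assms
    by (simp_all add: sinh_half_ln real_sqrt_mult real_sqrt_divide field_simps)
  then show ?thesis
    using \<open>0 < sqrt x1\<close> \<open>0 < sqrt x2\<close> by simp
qed

lemma cosh_sinh_cross_ratio_formula:
  assumes "0 < wedge m a" "0 < wedge m b" "0 < wedge m c" "0 < wedge m d" "wedge m n \<noteq> 0"
    and "0 < wedge n a * wedge n b" "0 < wedge n c * wedge n d" "wedge n b * wedge n c < 0"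
    and "wedge a b \<noteq> 0" "wedge c d \<noteq> 0"
  defines "x1 \<equiv> wedge m a * wedge n b / (wedge n a * wedge m b)"
    and "x2 \<equiv> wedge m d * wedge n c / (wedge n d * wedge m c)"
    and "x3 \<equiv> - (wedge m b * wedge n c) / (wedge n b * wedge m c)"
  shows "4 * (cosh ((ln x1 + ln x3) / 2) * cosh ((ln x2 - ln x3) / 2))
           / (sinh (ln x1 / 2) * sinh (ln x2 / 2)) - 2
    = 2 * (wedge a c * wedge b d + wedge a d * wedge b c) / (wedge a b * wedge c d)"
proof -
  have nz: "wedge n a \<noteq> 0" "wedge n b \<noteq> 0" "wedge n c \<noteq> 0" "wedge n d \<noteq> 0"
    using assms(6,7) by auto
  have "0 < x1" "0 < x2" "0 < x3"
    using assms(1-8) by (auto simp: x1_def x2_def x3_def zero_less_divide_iff zero_less_mult_iff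
        mult_less_0_iff divide_less_0_iff)
  then have hyp: "4 * (cosh ((ln x1 + ln x3) / 2) * cosh ((ln x2 - ln x3) / 2))
           / (sinh (ln x1 / 2) * sinh (ln x2 / 2))
       = 4 * ((x1 * x3 + 1) * (x2 / x3 + 1) / ((x1 - 1) * (x2 - 1)))"
    by (simp add: cosh_sinh_half_ln_ratio)
  have eqs: "x1 * x3 + 1 = - (wedge m n * wedge a c) / (wedge n a * wedge m c)"
    "x2 / x3 + 1 = wedge m n * wedge b d / (wedge n d * wedge m b)"
    "x1 - 1 = wedge m n * wedge a b / (wedge n a * wedge m b)"
    "x2 - 1 = - (wedge m n * wedge c d) / (wedge n d * wedge m c)"
    unfolding x1_def x2_def x3_def using assms(1-4) nz
    by (simp_all add: field_simps) (simp_all add: wedge_def algebra_simps)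
  have ratio: "(x1 * x3 + 1) * (x2 / x3 + 1) / ((x1 - 1) * (x2 - 1))
      = wedge a c * wedge b d / (wedge a b * wedge c d)"
    unfolding eqs using assms(1-5,9,10) nz by (simp add: field_simps)
  have "wedge a c * wedge b d = wedge a b * wedge c d + wedge a d * wedge b c"
    by (simp add: wedge_pluecker)
  then show ?thesis
    unfolding hyp ratio using assms(9,10) by (simp add: field_simps)
qed

section \<open>Order of the ideal points\<close>

lemma consecutive4_opposite_sides_order:
  assumes "at_inf M" "at_inf N" "at_inf A" "at_inf B" "at_inf C" "at_inf D"
    and "diff_half_planes M N A B C D"
    and "consecutive4 M N A B" "consecutive4 M N D C"
  shows "(0 < cpos M C \<and> cpos M C < cpos M D \<and> cpos M D < cpos M N \<and>
          cpos M N < cpos M A \<and> cpos M A < cpos M B) \<or>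
         (0 < cpos M B \<and> cpos M B < cpos M A \<and> cpos M A < cpos M N \<and>
          cpos M N < cpos M D \<and> cpos M D < cpos M C)"
proof -
  let ?w = "\<lambda>X Y. wedge (spinor M X) (spinor M Y)"
  let ?side = "\<lambda>X. X$1 * (?w M X * ?w N X)"
  have AB: "(0 < cpos M N \<and> cpos M N < cpos M A \<and> cpos M A < cpos M B) \<or>
            (0 < cpos M B \<and> cpos M B < cpos M A \<and> cpos M A < cpos M N)"
   and DC: "(0 < cpos M N \<and> cpos M N < cpos M D \<and> cpos M D < cpos M C) \<or>
            (0 < cpos M C \<and> cpos M C < cpos M D \<and> cpos M D < cpos M N)"
    using assms(8,9) unfolding consecutive4_def by auto
  have "0 < cpos M N"
    using AB by auto
  then have "0 < M$1" "0 < N$1" "0 < ?w M N"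
    using assms(1,2) wedge_spinor_self_pos[OF assms(1)] by (auto simp: at_inf_def)
  then have opposite: "(?side A + ?side B) * (?side C + ?side D) < 0"
    using opposite_sides_spin_prod[OF assms(7) at_inf_eq_spin_prod[OF assms(1,1)]
        at_inf_eq_spin_prod[OF assms(1,2)] at_inf_eq_spin_prod[OF assms(1,3)]
        at_inf_eq_spin_prod[OF assms(1,4)] at_inf_eq_spin_prod[OF assms(1,5)]
        at_inf_eq_spin_prod[OF assms(1,6)]]
    by simp
  have side_pos: "0 < ?side X" if "at_inf X" "cpos M N < cpos M X" for X
    using that \<open>0 < cpos M N\<close> wedge_spinor_self_pos[OF assms(1), of X] wedge_spinor_pos[of M N X]
    by (simp add: at_inf_def)
  have side_neg: "?side X < 0" if "at_inf X" "0 < cpos M X" "cpos M X < cpos M N" for X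
    using that wedge_spinor_self_pos[OF assms(1)] wedge_spinor_neg[of M X N]
    by (simp add: at_inf_def mult_pos_neg)
  show ?thesis
    using AB DC opposite side_pos[OF assms(3)] side_pos[OF assms(4)] side_pos[OF assms(5)]
      side_pos[OF assms(6)] side_neg[OF assms(3)] side_neg[OF assms(4)] side_neg[OF assms(5)]
      side_neg[OF assms(6)]
    by (smt (verit) mult_pos_pos mult_neg_neg)
qed

lemma wedge_spinor_signs_of_order:
  assumes "at_inf M"
    and "(0 < cpos M C \<and> cpos M C < cpos M D \<and> cpos M D < cpos M N \<and>
          cpos M N < cpos M A \<and> cpos M A < cpos M B) \<or>
         (0 < cpos M B \<and> cpos M B < cpos M A \<and> cpos M A < cpos M N \<and>
          cpos M N < cpos M D \<and> cpos M D < cpos M C)"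
  shows "0 < wedge (spinor M M) (spinor M N)" "0 < wedge (spinor M M) (spinor M A)"
    "0 < wedge (spinor M M) (spinor M B)" "0 < wedge (spinor M M) (spinor M C)"
    "0 < wedge (spinor M M) (spinor M D)"
    "0 < wedge (spinor M N) (spinor M A) * wedge (spinor M N) (spinor M B)"
    "0 < wedge (spinor M N) (spinor M C) * wedge (spinor M N) (spinor M D)"
    "wedge (spinor M N) (spinor M B) * wedge (spinor M N) (spinor M C) < 0"
    "0 < wedge (spinor M A) (spinor M B) * wedge (spinor M C) (spinor M D)"
    "0 < wedge (spinor M A) (spinor M D) * wedge (spinor M B) (spinor M C)"
  using assms(2) cpos_self[OF assms(1)] wedge_spinor_pos[of M] wedge_spinor_neg[of M]
  by (auto simp: zero_less_mult_iff mult_less_0_iff)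

lemma theta_other_terminal_spinor:
  assumes "at_inf M" "at_inf N" "at_inf B" "at_inf C" "at_inf C'" "other_terminal M N C C'"
    and "wedge (spinor M M) (spinor M N) \<noteq> 0" "wedge (spinor M M) (spinor M C) \<noteq> 0"
    and "wedge (spinor M N) (spinor M B) \<noteq> 0"
  shows "theta M N B C' = ln (- (wedge (spinor M M) (spinor M B) * wedge (spinor M N) (spinor M C))
    / (wedge (spinor M N) (spinor M B) * wedge (spinor M M) (spinor M C)))"
proof -
  let ?w = "\<lambda>X Y. wedge (spinor M X) (spinor M Y)"
  have "M$1 \<noteq> 0" "N$1 \<noteq> 0" "C$1 \<noteq> 0"
    using assms(1,2,4) by (simp_all add: at_inf_def)
  then have harmonic: "?w M C * ?w N C' = - (?w M C' * ?w N C)" "?w M C' \<noteq> 0"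
    using other_terminal_harmonic[OF assms(6) at_inf_eq_spin_prod[OF assms(1,1)]
        at_inf_eq_spin_prod[OF assms(1,2)] at_inf_eq_spin_prod[OF assms(1,4)]
        at_inf_eq_spin_prod[OF assms(1,5)] _ _ _ spinor_nonzero spinor_nonzero assms(7,8)]
    by auto
  then have "?w N C' = - (?w M C' * ?w N C) / ?w M C"
    using assms(8) by (auto simp: field_simps)
  then have "?w M B * ?w N C' / (?w N B * ?w M C') = - (?w M B * ?w N C) / (?w N B * ?w M C)"
    using assms(8,9) harmonic(2) by (simp add: field_simps)
  then show ?thesis
    by (simp add: theta_def cross_ratio_spinor[OF assms(1,1,2,3,5)])
qed

lemma normal_product_formula_of_order:
  fixes M N A B C D C' \<delta>1 \<delta>2 :: "real^3"
  assumes "at_inf M" "at_inf N" "at_inf A" "at_inf B" "at_inf C" "at_inf D" "at_inf C'"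
    and order: "(0 < cpos M C \<and> cpos M C < cpos M D \<and> cpos M D < cpos M N \<and>
                 cpos M N < cpos M A \<and> cpos M A < cpos M B) \<or>
                (0 < cpos M B \<and> cpos M B < cpos M A \<and> cpos M A < cpos M N \<and>
                 cpos M N < cpos M D \<and> cpos M D < cpos M C)"
    and "other_terminal M N C C'"
    and "mink \<delta>1 \<delta>1 = -2" and "mink \<delta>2 \<delta>2 = -2"
    and "mink \<delta>1 A = 0" and "mink \<delta>1 B = 0"
    and "mink \<delta>2 C = 0" and "mink \<delta>2 D = 0"
    and "line_pts M N \<subseteq> Hplus \<delta>1" and "line_pts M N \<subseteq> Hplus \<delta>2"
  shows "mink \<delta>1 \<delta>2 = 2 * cosh (line_dist A B C D) \<and>
         2 * cosh (line_dist A B C D) =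
           4 * (cosh ((theta M N A B + theta M N B C') / 2) *
                cosh ((theta M N D C - theta M N B C') / 2))
             / (sinh (theta M N A B / 2) * sinh (theta M N D C / 2)) - 2"
proof -
  let ?w = "\<lambda>X Y. wedge (spinor M X) (spinor M Y)"
  let ?r = "(?w A C * ?w B D + ?w A D * ?w B C) / (?w A B * ?w C D)"
  note rep = at_inf_eq_spin_prod[OF assms(1)]
  have l_pos: "0 < X$1" if "at_inf X" for X
    using that by (simp add: at_inf_def)
  note signs = wedge_spinor_signs_of_order[OF assms(1) order]
  have l_nz: "A$1 \<noteq> 0" "B$1 \<noteq> 0" "C$1 \<noteq> 0" "D$1 \<noteq> 0"
    using assms(3-6) by (simp_all add: at_inf_def)
  have "0 < ?w M A * ?w M B" "0 < ?w M C * ?w M D" "?w A B \<noteq> 0" "?w C D \<noteq> 0"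
    using signs by auto
  obtain k1 where k1: "0 < k1" "\<delta>1 = k1 *\<^sub>R spin_prod (spinor M A) (spinor M B)"
    "(k1 * ?w A B)\<^sup>2 = 2"
    by (rule normal_eq_spin_prod[OF rep[OF assms(3)] rep[OF assms(4)] l_nz(1,2) \<open>?w A B \<noteq> 0\<close>
          assms(12,13,10) rep[OF assms(1)] rep[OF assms(2)] l_pos[OF assms(1)] l_pos[OF assms(2)]
          assms(16) \<open>0 < ?w M A * ?w M B\<close> signs(6)])
  obtain k2 where k2: "0 < k2" "\<delta>2 = k2 *\<^sub>R spin_prod (spinor M C) (spinor M D)"
    "(k2 * ?w C D)\<^sup>2 = 2"
    by (rule normal_eq_spin_prod[OF rep[OF assms(5)] rep[OF assms(6)] l_nz(3,4) \<open>?w C D \<noteq> 0\<close>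
          assms(14,15,11) rep[OF assms(1)] rep[OF assms(2)] l_pos[OF assms(1)] l_pos[OF assms(2)]
          assms(17) \<open>0 < ?w M C * ?w M D\<close> signs(7)])
  have normals: "mink \<delta>1 \<delta>2 = 2 * ?r"
    using mink_unit_normals[OF k1(1) k2(1) k1(3) k2(3) signs(9)] k1(2) k2(2) by simp
  have dist: "line_dist A B C D = arcosh ?r"
    by (rule line_dist_spin_prod[OF rep[OF assms(3)] rep[OF assms(4)] rep[OF assms(5)]
          rep[OF assms(6)] l_pos[OF assms(3)] l_pos[OF assms(4)] l_pos[OF assms(5)]
          l_pos[OF assms(6)] signs(9,10)])
  have "1 \<le> ?r"
    using signs(9,10) wedge_pluecker[of "spinor M A" "spinor M B" "spinor M C" "spinor M D"]
    by (simp add: le_divide_eq)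
  have "?w M N \<noteq> 0" "?w M C \<noteq> 0" "?w N B \<noteq> 0"
    using signs(1,4,8) by auto
  then have theta_BC': "theta M N B C' = ln (- (?w M B * ?w N C) / (?w N B * ?w M C))"
    by (rule theta_other_terminal_spinor[OF assms(1,2,4,5,7,9)])
  have theta_AB_DC: "theta M N A B = ln (?w M A * ?w N B / (?w N A * ?w M B))"
    "theta M N D C = ln (?w M D * ?w N C / (?w N D * ?w M C))"
    by (simp_all add: theta_def cross_ratio_spinor[OF assms(1,1,2,3,4)]
        cross_ratio_spinor[OF assms(1,1,2,6,5)])
  show ?thesis
    unfolding theta_BC' theta_AB_DC dist
    using cosh_sinh_cross_ratio_formula[OF signs(2-5) \<open>?w M N \<noteq> 0\<close> signs(6-8)
        \<open>?w A B \<noteq> 0\<close> \<open>?w C D \<noteq> 0\<close>] normals \<open>1 \<le> ?r\<close>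
    by simp
qed

theorem lemma8p1p4:
  fixes M N A B C D C' \<delta>1 \<delta>2 :: "real^3"
  assumes "at_inf M" "at_inf N" "at_inf A" "at_inf B" "at_inf C" "at_inf D"
    and "diff_half_planes M N A B C D"
    and "consecutive4 M N A B" and "consecutive4 M N D C"
    and "other_terminal M N C C'"
    and "mink \<delta>1 \<delta>1 = -2" and "mink \<delta>2 \<delta>2 = -2"
    and "mink \<delta>1 A = 0" and "mink \<delta>1 B = 0"
    and "mink \<delta>2 C = 0" and "mink \<delta>2 D = 0"
    and "line_pts M N \<subseteq> Hplus \<delta>1" and "line_pts M N \<subseteq> Hplus \<delta>2"
  shows "mink \<delta>1 \<delta>2 = 2 * cosh (line_dist A B C D) \<and>
         2 * cosh (line_dist A B C D) =
           4 * (cosh ((theta M N A B + theta M N B C') / 2) *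
                cosh ((theta M N D C - theta M N B C') / 2))
             / (sinh (theta M N A B / 2) * sinh (theta M N D C / 2)) - 2"
proof -
  have "at_inf C'"
    using assms(10) by (simp add: other_terminal_def)
  moreover have "(0 < cpos M C \<and> cpos M C < cpos M D \<and> cpos M D < cpos M N \<and>
                  cpos M N < cpos M A \<and> cpos M A < cpos M B) \<or>
                 (0 < cpos M B \<and> cpos M B < cpos M A \<and> cpos M A < cpos M N \<and>
                  cpos M N < cpos M D \<and> cpos M D < cpos M C)"
    by (rule consecutive4_opposite_sides_order[OF assms(1-9)])
  ultimately show ?thesis
    by (rule normal_product_formula_of_order[OF assms(1-6) _ _ assms(10-18)])
qed

end
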